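(* Let $n\geq 4$ and let $\tau: T_n\to \mathrm{GL}_{n+1}(\mathbb{C})$ be a homogeneous $3$-local representation of the twin group $T_n$. Then $\tau$ is reducible.
   Context: The twin group $T_n$ ($n\geq 2$) is the group with generators $s_1,\dots,s_{n-1}$ and defining relations $s_i^2=1$ for $1\leq i\leq n-1$ and $s_is_j=s_js_i$ for $|i-j|\geq 2$. A representation $\tau:T_n\to\mathrm{GL}_{n+1}(\mathbb{C})$ is called homogeneous $3$-local if there is a single matrix $M\in\mathrm{GL}_3(\mathbb{C})$ such that $\tau(s_i)=\mathrm{diag}(I_{i-1},M,I_{n-i-1})$ (block-diagonal, with $I_r$ the $r\times r$ identity) for all $1\leq i\leq n-1$. A representation on $\mathbb{C}^{m}$ is reducible if there is a subspace $0\neq U\neq\mathbb{C}^m$ invariant under all images of the group. *)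

theory Defs
  imports "Jordan_Normal_Form.Matrix"
begin

text \<open>The (n+1)x(n+1) matrix diag(I_{i-1}, M, I_{n-i-1}) for 1 <= i <= n-1 and M a 3x3 matrix.
  Rows/columns are 0-indexed, so the block M occupies indices i-1, i, i+1.\<close>
definition local_mat :: "nat \<Rightarrow> complex mat \<Rightarrow> nat \<Rightarrow> complex mat" where
  "local_mat n M i = mat (n+1) (n+1) (\<lambda>(r,c).
     if i - 1 \<le> r \<and> r \<le> i + 1 \<and> i - 1 \<le> c \<and> c \<le> i + 1
     then M $$ (r - (i - 1), c - (i - 1))
     else if r = c then 1 else 0)"

definition twin_rep :: "nat \<Rightarrow> (nat \<Rightarrow> complex mat) \<Rightarrow> bool" where
  "twin_rep n A \<longleftrightarrow>
     (\<forall>i\<in>{1..n-1}. A i \<in> carrier_mat (n+1) (n+1) \<and> A i * A i = 1\<^sub>m (n+1)) \<and>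
     (\<forall>i\<in>{1..n-1}. \<forall>j\<in>{1..n-1}. (i + 2 \<le> j \<or> j + 2 \<le> i) \<longrightarrow> A i * A j = A j * A i)"

definition homogeneous_3_local :: "nat \<Rightarrow> (nat \<Rightarrow> complex mat) \<Rightarrow> bool" where
  "homogeneous_3_local n A \<longleftrightarrow>
     (\<exists>M \<in> carrier_mat 3 3. invertible_mat M \<and> (\<forall>i\<in>{1..n-1}. A i = local_mat n M i))"

definition is_subspace :: "nat \<Rightarrow> complex vec set \<Rightarrow> bool" where
  "is_subspace m U \<longleftrightarrow> U \<subseteq> carrier_vec m \<and> 0\<^sub>v m \<in> U \<and>
     (\<forall>u\<in>U. \<forall>v\<in>U. u + v \<in> U) \<and> (\<forall>c. \<forall>u\<in>U. c \<cdot>\<^sub>v u \<in> U)"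

text \<open>Reducible: a proper nonzero subspace of C^(n+1) invariant under all generator images
  (equivalently, under the whole image of the group).\<close>
definition twin_reducible :: "nat \<Rightarrow> (nat \<Rightarrow> complex mat) \<Rightarrow> bool" where
  "twin_reducible n A \<longleftrightarrow> (\<exists>U. is_subspace (n+1) U \<and> U \<noteq> {0\<^sub>v (n+1)} \<and> U \<noteq> carrier_vec (n+1) \<and>
     (\<forall>i\<in>{1..n-1}. \<forall>u\<in>U. A i *\<^sub>v u \<in> U))"

end

theory Submission
  imports Defs
begin

text \<open>Since \<open>n \<ge> 4\<close>, the generators \<open>s\<^sub>1\<close> and \<open>s\<^sub>3\<close> commute, and their
  blocks overlap in the single index 2 (indices start at 0). Comparing the entries \<open>(4,0)\<close> and
  \<open>(3,1)\<close> of the two products gives \<open>M\<^sub>2\<^sub>0 = 0\<close> and \<open>M\<^sub>1\<^sub>0 M\<^sub>2\<^sub>1 = 0\<close>.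
  If \<open>M\<^sub>1\<^sub>0 = 0\<close>, the first column of every \<open>\<tau>(s\<^sub>i)\<close> is a multiple of \<open>e\<^sub>0\<close>,
  so \<open>e\<^sub>0\<close> spans an invariant line; if \<open>M\<^sub>2\<^sub>1 = 0\<close>, the last row of every
  \<open>\<tau>(s\<^sub>i)\<close> is a multiple of \<open>e\<^sub>n\<^sup>T\<close>, so the hyperplane \<open>x\<^sub>n = 0\<close> is invariant.\<close>

lemma mult_mat_vec_index_single:
  assumes "A \<in> carrier_mat m m" "u \<in> carrier_vec m" "r < m" "k < m"
    and "\<And>j. j < m \<Longrightarrow> j \<noteq> k \<Longrightarrow> A $$ (r,j) * u $ j = 0"
  shows "(A *\<^sub>v u) $ r = A $$ (r,k) * u $ k"
proof -
  have "(A *\<^sub>v u) $ r = (\<Sum>j\<in>{0..<m}. A $$ (r,j) * u $ j)"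
    using assms(1-3) by (simp add: scalar_prod_def)
  also have "\<dots> = (\<Sum>j\<in>{k}. A $$ (r,j) * u $ j)"
    by (rule sum.mono_neutral_right) (use assms(4,5) in auto)
  finally show ?thesis by simp
qed

lemma dim_row_local_mat [simp]: "dim_row (local_mat n M i) = n + 1"
  and dim_col_local_mat [simp]: "dim_col (local_mat n M i) = n + 1"
  unfolding local_mat_def by simp_all

lemma local_mat_index:
  assumes "r \<le> n" "c \<le> n"
  shows "local_mat n M i $$ (r,c) =
    (if i - 1 \<le> r \<and> r \<le> i + 1 \<and> i - 1 \<le> c \<and> c \<le> i + 1
     then M $$ (r - (i - 1), c - (i - 1)) else if r = c then 1 else 0)"
  using assms unfolding local_mat_def by simp

lemma local_mat_index_off_block:
  assumes "r \<le> n" "c \<le> n" "\<not> (i - 1 \<le> r \<and> r \<le> i + 1 \<and> i - 1 \<le> c \<and> c \<le> i + 1)"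
  shows "local_mat n M i $$ (r,c) = (if r = c then 1 else 0)"
  using local_mat_index[OF assms(1,2)] assms(3) by (simp only: if_False)

lemma local_mat_index_block:
  assumes "r \<le> n" "c \<le> n" "i - 1 \<le> r" "r \<le> i + 1" "i - 1 \<le> c" "c \<le> i + 1"
  shows "local_mat n M i $$ (r,c) = M $$ (r - (i - 1), c - (i - 1))"
  using local_mat_index[OF assms(1,2)] assms(3-) by (simp only: simp_thms if_True)

lemma local_mat_mult_index:
  assumes "1 \<le> i" "i < n" "r \<le> n" "c \<le> n" "B \<in> carrier_mat (n+1) (n+1)"
  shows "(local_mat n M i * B) $$ (r,c) =
    (if i - 1 \<le> r \<and> r \<le> i + 1
     then M $$ (r - (i - 1), 0) * B $$ (i - 1, c) + M $$ (r - (i - 1), 1) * B $$ (i, c)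
        + M $$ (r - (i - 1), 2) * B $$ (i + 1, c)
     else B $$ (r,c))"
proof -
  let ?f = "\<lambda>k. local_mat n M i $$ (r,k) * B $$ (k,c)"
  have "(local_mat n M i * B) $$ (r,c) = row (local_mat n M i) r \<bullet> col B c"
    using assms by simp
  also have "\<dots> = (\<Sum>k\<in>{0..<n+1}. ?f k)"
    unfolding scalar_prod_def using assms by (intro sum.cong) auto
  finally have prod: "(local_mat n M i * B) $$ (r,c) = (\<Sum>k\<in>{0..<n+1}. ?f k)" .
  show ?thesis
  proof (cases "i - 1 \<le> r \<and> r \<le> i + 1")
    case True
    have "(\<Sum>k\<in>{0..<n+1}. ?f k) = (\<Sum>k\<in>{i-1, i, i+1}. ?f k)"
    proof (rule sum.mono_neutral_right)
      show "\<forall>k\<in>{0..<n+1} - {i-1, i, i+1}. ?f k = 0"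
      proof
        fix k assume k: "k \<in> {0..<n+1} - {i-1, i, i+1}"
        then have "\<not> (i - 1 \<le> k \<and> k \<le> i + 1)" "k \<noteq> r" "k \<le> n"
          using True by auto
        then show "?f k = 0"
          using assms(3) by (simp add: local_mat_index_off_block)
      qed
    qed (use assms in auto)
    also have "\<dots> = ?f (i-1) + ?f i + ?f (i+1)"
      using assms by (cases i) (auto simp: add.assoc)
    also have "\<dots> = M $$ (r - (i - 1), 0) * B $$ (i - 1, c) + M $$ (r - (i - 1), 1) * B $$ (i, c)
        + M $$ (r - (i - 1), 2) * B $$ (i + 1, c)"
    proof -
      have "i - (i - 1) = 1" "i + 1 - (i - 1) = 2" using assms(1) by auto
      then show ?thesis
        using assms True by (simp add: local_mat_index_block)
    qed
    finally show ?thesis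
      using prod by (simp only: if_P[OF True])
  next
    case False
    have "(\<Sum>k\<in>{0..<n+1}. ?f k) = (\<Sum>k\<in>{r}. ?f k)"
    proof (rule sum.mono_neutral_right)
      show "\<forall>k\<in>{0..<n+1} - {r}. ?f k = 0"
        using False assms(3) by (auto simp: local_mat_index_off_block)
    qed (use assms in auto)
    also have "\<dots> = B $$ (r,c)"
      using assms False by (simp add: local_mat_index_off_block)
    finally show ?thesis
      using prod by (simp only: if_not_P[OF False])
  qed
qed

lemma local_mat_commute_zero_entries:
  assumes "1 \<le> i" "i + 3 \<le> n"
    and "local_mat n M i * local_mat n M (i+2) = local_mat n M (i+2) * local_mat n M i"
  shows "M $$ (2,0) = 0" "M $$ (1,0) * M $$ (2,1) = 0"
proof -
  obtain j where i: "i = Suc j"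
    using assms(1) by (cases i) auto
  let ?L = "local_mat n M i" and ?L' = "local_mat n M (i+2)"
  have "(?L * ?L') $$ (j+4, j) = 0"
    using i assms(2) by (subst local_mat_mult_index) (simp_all add: carrier_matI local_mat_index)
  moreover have "(?L' * ?L) $$ (j+4, j) = M $$ (2,0) * M $$ (2,0)"
    using i assms(2) by (subst local_mat_mult_index) (simp_all add: carrier_matI local_mat_index)
  ultimately show "M $$ (2,0) = 0"
    using assms(3) by simp
  have "(?L * ?L') $$ (j+3, j+1) = 0"
    using i assms(2) by (subst local_mat_mult_index) (simp_all add: carrier_matI local_mat_index)
  moreover have "(?L' * ?L) $$ (j+3, j+1) = M $$ (1,0) * M $$ (2,1)"
    using i assms(2) by (subst local_mat_mult_index) (simp_all add: carrier_matI local_mat_index)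
  ultimately show "M $$ (1,0) * M $$ (2,1) = 0"
    using assms(3) by simp
qed

lemma local_mat_first_col_off_diag:
  assumes "M $$ (1,0) = 0" "M $$ (2,0) = 0" "1 \<le> i" "r \<le> n" "r \<noteq> 0"
  shows "local_mat n M i $$ (r,0) = 0"
proof (cases "i = 1")
  case True
  then show ?thesis
    using assms by (cases "r \<le> 2") (auto simp: local_mat_index numeral_2_eq_2 le_Suc_eq)
qed (use assms in \<open>simp add: local_mat_index\<close>)

lemma local_mat_last_row_off_diag:
  assumes "M $$ (2,0) = 0" "M $$ (2,1) = 0" "1 \<le> i" "i < n" "c \<le> n" "c \<noteq> n"
  shows "local_mat n M i $$ (n,c) = 0"
proof (cases "i + 1 = n")
  case True
  then have offsets: "n - (i - 1) = 2" "i - (i - 1) = 1"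
    using assms(3) by simp_all
  consider "c < i - 1" | "c = i - 1" | "c = i"
    using True assms(5,6) by linarith
  then show ?thesis
    using assms True offsets by cases (simp_all add: local_mat_index)
qed (use assms in \<open>simp add: local_mat_index\<close>)

lemma twin_reducible_of_col_off_diag_zero:
  fixes A :: "nat \<Rightarrow> complex mat"
  assumes "1 \<le> n" "k \<le> n"
    and carrier: "\<And>i. i \<in> {1..n-1} \<Longrightarrow> A i \<in> carrier_mat (n+1) (n+1)"
    and col: "\<And>i r. i \<in> {1..n-1} \<Longrightarrow> r \<le> n \<Longrightarrow> r \<noteq> k \<Longrightarrow> A i $$ (r,k) = 0"
  shows "twin_reducible n A"
proof -
  define U :: "complex vec set" where "U = {v \<in> carrier_vec (n+1). \<forall>j\<le>n. j \<noteq> k \<longrightarrow> v $ j = 0}"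
  define k' :: nat where "k' = (if k = 0 then 1 else 0)"
  have "is_subspace (n+1) U"
    unfolding is_subspace_def U_def by auto
  moreover have "unit_vec (n+1) k \<in> U" "unit_vec (n+1) k \<noteq> 0\<^sub>v (n+1)"
    using assms(2) by (auto simp: U_def unit_vec_def vec_eq_iff)
  then have "U \<noteq> {0\<^sub>v (n+1)}"
    by blast
  moreover have "unit_vec (n+1) k' \<notin> U"
    using assms(1) by (auto simp: U_def k'_def)
  then have "U \<noteq> carrier_vec (n+1)"
    by auto
  moreover have "A i *\<^sub>v u \<in> U" if i: "i \<in> {1..n-1}" and u: "u \<in> U" for i u
  proof -
    have "(A i *\<^sub>v u) $ r = 0" if "r \<le> n" "r \<noteq> k" for r
    proof -
      have "(A i *\<^sub>v u) $ r = A i $$ (r,k) * u $ k"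
        by (rule mult_mat_vec_index_single[OF carrier[OF i]]) (use that u assms(2) in \<open>auto simp: U_def\<close>)
      then show ?thesis
        using col[OF i that] by simp
    qed
    then show ?thesis
      using carrier[OF i] u by (auto simp: U_def)
  qed
  ultimately show ?thesis
    unfolding twin_reducible_def by blast
qed

lemma twin_reducible_of_row_off_diag_zero:
  fixes A :: "nat \<Rightarrow> complex mat"
  assumes "1 \<le> n" "k \<le> n"
    and carrier: "\<And>i. i \<in> {1..n-1} \<Longrightarrow> A i \<in> carrier_mat (n+1) (n+1)"
    and row: "\<And>i c. i \<in> {1..n-1} \<Longrightarrow> c \<le> n \<Longrightarrow> c \<noteq> k \<Longrightarrow> A i $$ (k,c) = 0"
  shows "twin_reducible n A"
proof -
  define U :: "complex vec set" where "U = {v \<in> carrier_vec (n+1). v $ k = 0}"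
  define k' :: nat where "k' = (if k = 0 then 1 else 0)"
  have "is_subspace (n+1) U"
    unfolding is_subspace_def U_def using assms(2) by auto
  moreover have "unit_vec (n+1) k' \<in> U" "unit_vec (n+1) k' \<noteq> 0\<^sub>v (n+1)"
    using assms(1,2) by (auto simp: U_def k'_def unit_vec_def vec_eq_iff)
  then have "U \<noteq> {0\<^sub>v (n+1)}"
    by blast
  moreover have "unit_vec (n+1) k \<notin> U"
    using assms(2) by (auto simp: U_def)
  then have "U \<noteq> carrier_vec (n+1)"
    by auto
  moreover have "A i *\<^sub>v u \<in> U" if i: "i \<in> {1..n-1}" and u: "u \<in> U" for i u
  proof -
    have "(A i *\<^sub>v u) $ k = A i $$ (k,k) * u $ k"
      by (rule mult_mat_vec_index_single[OF carrier[OF i]]) (use row[OF i] u assms(2) in \<open>auto simp: U_def\<close>)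
    then show ?thesis
      using carrier[OF i] u by (auto simp: U_def)
  qed
  ultimately show ?thesis
    unfolding twin_reducible_def by blast
qed

theorem theorem3p2:
  fixes n :: nat and A :: "nat \<Rightarrow> complex mat"
  assumes "n \<ge> 4" and "twin_rep n A" and "homogeneous_3_local n A"
  shows "twin_reducible n A"
proof -
  obtain M where A_eq: "\<And>i. i \<in> {1..n-1} \<Longrightarrow> A i = local_mat n M i"
    using assms(3) unfolding homogeneous_3_local_def by blast
  have carrier: "\<And>i. i \<in> {1..n-1} \<Longrightarrow> A i \<in> carrier_mat (n+1) (n+1)"
    using assms(2) unfolding twin_rep_def by blast
  have "A 1 * A 3 = A 3 * A 1"
    using assms(1,2) unfolding twin_rep_def by auto
  then have "local_mat n M 1 * local_mat n M 3 = local_mat n M 3 * local_mat n M 1"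
    using A_eq[of 1] A_eq[of 3] assms(1) by simp
  then have M20: "M $$ (2,0) = 0" and "M $$ (1,0) * M $$ (2,1) = 0"
    using local_mat_commute_zero_entries[of 1 n M] assms(1) by (simp_all add: numeral_3_eq_3)
  then consider "M $$ (1,0) = 0" | "M $$ (2,1) = 0"
    by auto
  then show ?thesis
  proof cases
    case 1
    show ?thesis
      using assms(1) carrier A_eq local_mat_first_col_off_diag[OF 1 M20]
      by (intro twin_reducible_of_col_off_diag_zero[where k = 0]) auto
  next
    case 2
    show ?thesis
      using assms(1) carrier A_eq local_mat_last_row_off_diag[OF M20 2]
      by (intro twin_reducible_of_row_off_diag_zero[where k = n]) auto
  qed
qed

end
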